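(* Let $E$ be a finite set and $V \subset \mathbb R^E$ a linear subspace with oriented matroid $M$. Let $\sim$ be the equivalence relation on triples $(F,G,T)$ ($T$ a tope of $M$, $F\subset G$ flats relatively acyclic in $T$) given by $(F,G,T)\sim(F',G',T')$ iff $(F,G)=(F',G')$ and $\pi_{G\setminus F}(T)=\pi_{G\setminus F}(T')$. Then the equivalence classes of $\sim$ are in bijection with the cells $Y_{FGT}^\circ$, where $F\subset G$ range over flats of $M$ and $T$ over topes of $(M/F)|_G$. If $[S,I,J]$ is the equivalence class (of the triple $(I,J,S)$) corresponding to $Y_{FGT}^\circ$, then $Y_{FGT}^\circ = {}_S\mathcal Y_{IJ}^\circ$. Explicitly, $Y_{FGT}^\circ = {}_S\mathcal Y_{IJ}^\circ$ if and only if $(F,G) = (I,J)$ and $\pi_{G\setminus F}(S) = \pi_{G\setminus F}(T)$.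
   Context: $\mathbb P^1_{\mathbb R}=\mathbb R\cup\{\infty\}$. The sign map $s:\mathbb R^E\to\{-,0,+\}^E$ records signs of coordinates; the covectors of $M$ are $\{s(v):v\in V\}$; for a signed set $X$, $X^-,X^0,X^+$ are coordinates with value $-,0,+$; $X\le Y$ means $X^+\subset Y^+$, $X^-\subset Y^-$; topes are maximal covectors; flats are the sets $X^0$. A flat is relatively acyclic in a tope $T$ if it equals $X^0$ for a covector $X\le T$. $\pi_A$ denotes restriction to coordinates in $A$. For a flat $F$, $M/F$ is the oriented matroid on $E$ whose covectors are the covectors $X$ of $M$ with $F\subset X^0$; for a flat $G\supset F$, $(M/F)|_G$ has covectors $\pi_G(X)$ for $X$ covectors of $M/F$; its topes are signed sets on $G$ with zero set $F$. $Y_V$ is the Zariski closure of $V$ in $(\mathbb P^1_{\mathbb R})^E$, and for such $F\subset G$, $T$: $Y_{FGT}^\circ := Y_V\cap(0^F\times\mathbb R_{>0}^{T^+}\times\mathbb R_{<0}^{T^-}\times\infty^{E\setminus G})$. ${}_S\mathcal Y_V$ is the analytic closure of $s^{-1}(S)\cap V$ in $(\mathbb P^1_{\mathbb R})^E$, and ${}_S\mathcal Y_{IJ}^\circ := {}_S\mathcal Y_V \cap (0^I\times\mathbb R_{>0}^{(J\setminus I)\cap S^+}\times\mathbb R_{<0}^{(J\setminus I)\cap S^-}\times\infty^{E\setminus J})$. *)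

theory Defs
  imports "HOL-Analysis.Analysis"
begin

datatype p1 = Fin real | Infty

instantiation p1 :: topological_space
begin

definition open_p1 :: "p1 set \<Rightarrow> bool" where
  "open_p1 S \<longleftrightarrow> open (Fin -` S) \<and>
     (Infty \<in> S \<longrightarrow> (\<exists>R. \<forall>x::real. R < \<bar>x\<bar> \<longrightarrow> Fin x \<in> S))"

instance
proof
  show "open (UNIV :: p1 set)" by (simp add: open_p1_def)
next
  fix S T :: "p1 set"
  assume S: "open S" and T: "open T"
  show "open (S \<inter> T)"
    unfolding open_p1_def
  proof
    show "open (Fin -` (S \<inter> T))"
      using S T by (simp add: open_p1_def vimage_Int open_Int)
    show "Infty \<in> S \<inter> T \<longrightarrow> (\<exists>R. \<forall>x. R < \<bar>x\<bar> \<longrightarrow> Fin x \<in> S \<inter> T)"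
    proof
      assume "Infty \<in> S \<inter> T"
      then obtain R1 R2 where "\<forall>x. R1 < \<bar>x\<bar> \<longrightarrow> Fin x \<in> S" "\<forall>x. R2 < \<bar>x\<bar> \<longrightarrow> Fin x \<in> T"
        using S T by (auto simp: open_p1_def)
      then show "\<exists>R. \<forall>x. R < \<bar>x\<bar> \<longrightarrow> Fin x \<in> S \<inter> T"
        by (intro exI[of _ "max R1 R2"]) auto
    qed
  qed
next
  fix K :: "p1 set set"
  assume K: "\<forall>S\<in>K. open S"
  show "open (\<Union>K)"
    unfolding open_p1_def
  proof
    have "Fin -` \<Union>K = (\<Union>S\<in>K. Fin -` S)" by auto
    then show "open (Fin -` \<Union>K)" using K by (auto simp: open_p1_def)
    show "Infty \<in> \<Union>K \<longrightarrow> (\<exists>R. \<forall>x. R < \<bar>x\<bar> \<longrightarrow> Fin x \<in> \<Union>K)"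
    proof
      assume "Infty \<in> \<Union>K"
      then obtain S where S: "S \<in> K" "Infty \<in> S" by blast
      then obtain R where "\<forall>x. R < \<bar>x\<bar> \<longrightarrow> Fin x \<in> S"
        using K unfolding open_p1_def by blast
      then show "\<exists>R. \<forall>x. R < \<bar>x\<bar> \<longrightarrow> Fin x \<in> \<Union>K"
        using S by blast
    qed
  qed
qed

end

fun hom :: "p1 \<Rightarrow> real \<times> real" where
  "hom (Fin r) = (r, 1)"
| "hom Infty = (1, 0)"

inductive_set polyfun :: "(('e \<Rightarrow> real \<times> real) \<Rightarrow> real) set" where
  const: "(\<lambda>_. c) \<in> polyfun"
| xcoord: "(\<lambda>z. fst (z e)) \<in> polyfun"
| ycoord: "(\<lambda>z. snd (z e)) \<in> polyfun"
| add: "f \<in> polyfun \<Longrightarrow> g \<in> polyfun \<Longrightarrow> (\<lambda>z. f z + g z) \<in> polyfun"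
| mult: "f \<in> polyfun \<Longrightarrow> g \<in> polyfun \<Longrightarrow> (\<lambda>z. f z * g z) \<in> polyfun"

definition multihom :: "(('e \<Rightarrow> real \<times> real) \<Rightarrow> real) \<Rightarrow> bool" where
  "multihom f \<longleftrightarrow> f \<in> polyfun \<and>
     (\<exists>d :: 'e \<Rightarrow> nat. \<forall>z lam. (\<forall>e. lam e \<noteq> 0) \<longrightarrow>
        f (\<lambda>e. (lam e * fst (z e), lam e * snd (z e))) = (\<Prod>e\<in>UNIV. lam e ^ d e) * f z)"

definition zariski_closed :: "('e \<Rightarrow> p1) set \<Rightarrow> bool" where
  "zariski_closed Z \<longleftrightarrow> (\<exists>P. (\<forall>f\<in>P. multihom f) \<and>
      Z = {p. \<forall>f\<in>P. f (\<lambda>e. hom (p e)) = 0})"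

definition zariski_closure :: "('e \<Rightarrow> p1) set \<Rightarrow> ('e \<Rightarrow> p1) set" where
  "zariski_closure A = \<Inter>{Z. zariski_closed Z \<and> A \<subseteq> Z}"

definition emb :: "('e \<Rightarrow> real) \<Rightarrow> ('e \<Rightarrow> p1)" where
  "emb v = (\<lambda>e. Fin (v e))"

definition lin_subspace :: "('e \<Rightarrow> real) set \<Rightarrow> bool" where
  "lin_subspace V \<longleftrightarrow> (\<lambda>_. 0) \<in> V \<and> (\<forall>v\<in>V. \<forall>w\<in>V. (\<lambda>e. v e + w e) \<in> V)
      \<and> (\<forall>c::real. \<forall>v\<in>V. (\<lambda>e. c * v e) \<in> V)"

datatype sgn = Neg | Zer | Pos

definition sign_of :: "real \<Rightarrow> sgn" where
  "sign_of x = (if x > 0 then Pos else if x < 0 then Neg else Zer)"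

definition signmap :: "('e \<Rightarrow> real) \<Rightarrow> ('e \<Rightarrow> sgn)" where
  "signmap v = (\<lambda>e. sign_of (v e))"

definition pos :: "('e \<Rightarrow> sgn) \<Rightarrow> 'e set" where "pos X = {e. X e = Pos}"
definition neg :: "('e \<Rightarrow> sgn) \<Rightarrow> 'e set" where "neg X = {e. X e = Neg}"
definition zer :: "('e \<Rightarrow> sgn) \<Rightarrow> 'e set" where "zer X = {e. X e = Zer}"

definition sle :: "('e \<Rightarrow> sgn) \<Rightarrow> ('e \<Rightarrow> sgn) \<Rightarrow> bool" where
  "sle X Y \<longleftrightarrow> pos X \<subseteq> pos Y \<and> neg X \<subseteq> neg Y"

definition covectors :: "('e \<Rightarrow> real) set \<Rightarrow> ('e \<Rightarrow> sgn) set" where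
  "covectors V = signmap ` V"

definition topes :: "('e \<Rightarrow> real) set \<Rightarrow> ('e \<Rightarrow> sgn) set" where
  "topes V = {T \<in> covectors V. \<forall>Y\<in>covectors V. sle T Y \<longrightarrow> Y = T}"

definition flats :: "('e \<Rightarrow> real) set \<Rightarrow> 'e set set" where
  "flats V = zer ` covectors V"

definition rel_acyclic :: "('e \<Rightarrow> real) set \<Rightarrow> 'e set \<Rightarrow> ('e \<Rightarrow> sgn) \<Rightarrow> bool" where
  "rel_acyclic V F T \<longleftrightarrow> (\<exists>X\<in>covectors V. sle X T \<and> zer X = F)"

text \<open>Restriction pi_A; a signed set on A is represented by its extension by Zer outside A.\<close>
definition restr :: "'e set \<Rightarrow> ('e \<Rightarrow> sgn) \<Rightarrow> ('e \<Rightarrow> sgn)" where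
  "restr A X = (\<lambda>e. if e \<in> A then X e else Zer)"

text \<open>Covectors and topes of (M/F)|_G (signed sets on G).\<close>
definition minor_covectors :: "('e \<Rightarrow> real) set \<Rightarrow> 'e set \<Rightarrow> 'e set \<Rightarrow> ('e \<Rightarrow> sgn) set" where
  "minor_covectors V F G = {restr G X | X. X \<in> covectors V \<and> F \<subseteq> zer X}"

definition minor_topes :: "('e \<Rightarrow> real) set \<Rightarrow> 'e set \<Rightarrow> 'e set \<Rightarrow> ('e \<Rightarrow> sgn) set" where
  "minor_topes V F G = {T \<in> minor_covectors V F G.
      \<forall>Y\<in>minor_covectors V F G. sle T Y \<longrightarrow> Y = T}"

definition YV :: "('e \<Rightarrow> real) set \<Rightarrow> ('e \<Rightarrow> p1) set" where
  "YV V = zariski_closure (emb ` V)"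

definition cellY :: "('e \<Rightarrow> real) set \<Rightarrow> 'e set \<Rightarrow> 'e set \<Rightarrow> ('e \<Rightarrow> sgn) \<Rightarrow> ('e \<Rightarrow> p1) set" where
  "cellY V F G T = YV V \<inter> {p. (\<forall>e\<in>F. p e = Fin 0)
      \<and> (\<forall>e\<in>pos T. \<exists>x>0. p e = Fin x) \<and> (\<forall>e\<in>neg T. \<exists>x<0. p e = Fin x)
      \<and> (\<forall>e. e \<notin> G \<longrightarrow> p e = Infty)}"

definition SY :: "('e \<Rightarrow> real) set \<Rightarrow> ('e \<Rightarrow> sgn) \<Rightarrow> ('e \<Rightarrow> p1) set" where
  "SY V S = closure (emb ` (V \<inter> signmap -` {S}))"

definition cellSY :: "('e \<Rightarrow> real) set \<Rightarrow> ('e \<Rightarrow> sgn) \<Rightarrow> 'e set \<Rightarrow> 'e set \<Rightarrow> ('e \<Rightarrow> p1) set" where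
  "cellSY V S I J = SY V S \<inter> {p. (\<forall>e\<in>I. p e = Fin 0)
      \<and> (\<forall>e\<in>(J - I) \<inter> pos S. \<exists>x>0. p e = Fin x)
      \<and> (\<forall>e\<in>(J - I) \<inter> neg S. \<exists>x<0. p e = Fin x)
      \<and> (\<forall>e. e \<notin> J \<longrightarrow> p e = Infty)}"

definition triples :: "('e \<Rightarrow> real) set \<Rightarrow> ('e set \<times> 'e set \<times> ('e \<Rightarrow> sgn)) set" where
  "triples V = {(F, G, T). T \<in> topes V \<and> F \<in> flats V \<and> G \<in> flats V \<and> F \<subseteq> G
      \<and> rel_acyclic V F T \<and> rel_acyclic V G T}"

definition sim :: "('e \<Rightarrow> real) set \<Rightarrow>
    (('e set \<times> 'e set \<times> ('e \<Rightarrow> sgn)) \<times> ('e set \<times> 'e set \<times> ('e \<Rightarrow> sgn))) set" where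
  "sim V = {((F, G, T), (F', G', T')). (F, G, T) \<in> triples V \<and> (F', G', T') \<in> triples V
      \<and> F = F' \<and> G = G' \<and> restr (G - F) T = restr (G - F) T'}"

definition cell_index :: "('e \<Rightarrow> real) set \<Rightarrow> ('e set \<times> 'e set \<times> ('e \<Rightarrow> sgn)) set" where
  "cell_index V = {(F, G, T). F \<in> flats V \<and> G \<in> flats V \<and> F \<subseteq> G \<and> T \<in> minor_topes V F G}"

end

(* A point p of the cell Y_FGT is finite exactly on G, and its finite part is pi_G(v) for some
   v in V: a linear form on R^G vanishing on pi_G(V) but not at p would homogenise to a
   multihomogeneous polynomial vanishing on V, hence on the Zariski closure Y_V, but not at p.
   Given a triple (F, G, S) with pi_(G-F)(S) = T, pick w in V with zero set G and sign vector
   below S, and s in V with sign vector S. Along the curve v + t w + s/t the sign vector is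
   eventually the composition sign(w) o sign(v) o S = S, while the curve converges to p in
   (P^1)^E as t tends to infinity; so Y_FGT lies in the analytic closure of the cone of S, which
   gives Y_FGT = _S Y_FG. Conversely F, G and T can be read off from any point of the nonempty
   cell Y_FGT, and every index (F, G, T) comes from a triple because covectors are closed under
   composition. *)

theory Submission
  imports Defs "HOL-Real_Asymp.Real_Asymp"
begin

section \<open>Zariski closed sets are closed\<close>

lemma open_Fin_image: "open W \<Longrightarrow> open (Fin ` W)"
  by (auto simp: open_p1_def inj_vimage_image_eq inj_on_def)

definition Infty_nbhd :: "real \<Rightarrow> p1 set" where
  "Infty_nbhd R = insert Infty (Fin ` {x. R < \<bar>x\<bar>})"

lemma open_Infty_nbhd: "open (Infty_nbhd R)"
proof -
  have "Fin -` Infty_nbhd R = {x. R < \<bar>x\<bar>}" by (auto simp: Infty_nbhd_def)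
  moreover have "open {x::real. R < \<bar>x\<bar>}" by (intro open_Collect_less continuous_intros)
  ultimately show ?thesis by (auto simp: open_p1_def Infty_nbhd_def)
qed

lemma continuous_on_hom: "continuous_on (range Fin) hom"
  unfolding continuous_on_open_invariant
proof (intro allI impI)
  fix B :: "(real \<times> real) set" assume "open B"
  then have "open (Fin ` ((\<lambda>y. (y, 1)) -` B))"
    by (intro open_Fin_image continuous_open_vimage continuous_intros)
  moreover have "Fin ` ((\<lambda>y. (y, 1)) -` B) \<inter> range Fin = hom -` B \<inter> range Fin" by auto
  ultimately show "\<exists>A. open A \<and> A \<inter> range Fin = hom -` B \<inter> range Fin" by blast
qed

text \<open>Homogeneous coordinates normalised to first coordinate 1, a chart around \<open>Infty\<close>.\<close>
fun hom_Infty :: "p1 \<Rightarrow> real \<times> real" where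
  "hom_Infty Infty = (1, 0)"
| "hom_Infty (Fin x) = (1, inverse x)"

lemma continuous_on_hom_Infty: "continuous_on (Infty_nbhd 1) hom_Infty"
  unfolding continuous_on_topological
proof (intro ballI allI impI)
  fix q B assume q: "q \<in> Infty_nbhd 1" and B: "open B" "hom_Infty q \<in> B"
  show "\<exists>A. open A \<and> q \<in> A \<and> (\<forall>y\<in>Infty_nbhd 1. y \<in> A \<longrightarrow> hom_Infty y \<in> B)"
  proof (cases q)
    case (Fin z)
    let ?W = "{x::real. 1 < \<bar>x\<bar>} \<inter> (\<lambda>y. (1::real, inverse y)) -` B"
    have "open ?W"
      by (intro continuous_open_preimage open_Collect_less continuous_intros B(1)) auto
    then show ?thesis
      using q B Fin by (intro exI[of _ "Fin ` ?W"]) (auto simp: Infty_nbhd_def open_Fin_image)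
  next
    case Infty
    obtain r where r: "r > 0" "ball (1, 0) r \<subseteq> B"
      using B Infty open_contains_ball by force
    have "hom_Infty y \<in> B" if "y \<in> Infty_nbhd (1 / r)" for y
    proof (cases y)
      case (Fin x)
      then have "1 / r < \<bar>x\<bar>" using that by (auto simp: Infty_nbhd_def)
      then have "\<bar>inverse x\<bar> < r"
        using r(1) by (metis abs_inverse inverse_eq_divide inverse_inverse_eq inverse_less_imp_less)
      then show ?thesis using r(2) Fin by (auto simp: dist_Pair_Pair dist_real_def)
    qed (use r in auto)
    moreover have "q \<in> Infty_nbhd (1 / r)" using Infty by (simp add: Infty_nbhd_def)
    ultimately show ?thesis using open_Infty_nbhd by blast
  qed
qed

definition hom_chart :: "('e \<Rightarrow> p1) \<Rightarrow> ('e \<Rightarrow> p1) \<Rightarrow> ('e \<Rightarrow> real \<times> real)" where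
  "hom_chart p q = (\<lambda>e. if p e = Infty then hom_Infty (q e) else hom (q e))"

definition chart_domain :: "('e \<Rightarrow> p1) \<Rightarrow> ('e \<Rightarrow> p1) set" where
  "chart_domain p = {q. \<forall>e. q e \<in> (if p e = Infty then Infty_nbhd 1 else range Fin)}"

lemma open_chart_domain: "open (chart_domain (p :: 'e::finite \<Rightarrow> p1))"
  using product_topology_basis'[of UNIV "\<lambda>e. if p e = Infty then Infty_nbhd 1 else range Fin" "\<lambda>e. e"]
  by (simp add: chart_domain_def open_Infty_nbhd open_Fin_image)

lemma mem_chart_domain_self: "p \<in> chart_domain p"
  unfolding chart_domain_def
proof (intro CollectI allI)
  fix e show "p e \<in> (if p e = Infty then Infty_nbhd 1 else range Fin)"
    by (cases "p e") (auto simp: Infty_nbhd_def)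
qed

lemma hom_chart_self: "hom_chart p p = (\<lambda>e. hom (p e))"
  by (auto simp: hom_chart_def fun_eq_iff)

lemma continuous_on_hom_chart: "continuous_on (chart_domain p) (hom_chart p)"
  unfolding hom_chart_def
proof (intro continuous_on_coordinatewise_then_product)
  fix e
  have coord: "continuous_on (chart_domain p) (\<lambda>q. q e)"
    by (rule continuous_on_product_coordinates[THEN continuous_on_subset]) auto
  show "continuous_on (chart_domain p) (\<lambda>q. if p e = Infty then hom_Infty (q e) else hom (q e))"
  proof (cases "p e = Infty")
    case True
    have "continuous_on (chart_domain p) (\<lambda>q. hom_Infty (q e))"
      by (rule continuous_on_compose2[OF continuous_on_hom_Infty coord])
        (use True in \<open>auto simp: chart_domain_def\<close>)
    then show ?thesis using True by simp
  next
    case False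
    have "continuous_on (chart_domain p) (\<lambda>q. hom (q e))"
      by (rule continuous_on_compose2[OF continuous_on_hom coord])
        (use False in \<open>auto simp: chart_domain_def\<close>)
    then show ?thesis using False by simp
  qed
qed

lemma hom_eq_scaled_hom_chart:
  assumes "q \<in> chart_domain p"
  obtains lam where "\<forall>e. lam e \<noteq> 0"
    and "(\<lambda>e. hom (q e)) = (\<lambda>e. (lam e * fst (hom_chart p q e), lam e * snd (hom_chart p q e)))"
proof
  define lam where "lam e = (if p e = Infty then (case q e of Fin x \<Rightarrow> x | Infty \<Rightarrow> 1) else 1)" for e
  have q: "q e \<in> (if p e = Infty then Infty_nbhd 1 else range Fin)" for e
    using assms by (auto simp: chart_domain_def)
  show "\<forall>e. lam e \<noteq> 0"
  proof
    fix e show "lam e \<noteq> 0" using q[of e] by (cases "q e") (auto simp: lam_def Infty_nbhd_def)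
  qed
  show "(\<lambda>e. hom (q e)) = (\<lambda>e. (lam e * fst (hom_chart p q e), lam e * snd (hom_chart p q e)))"
  proof
    fix e show "hom (q e) = (lam e * fst (hom_chart p q e), lam e * snd (hom_chart p q e))"
      using q[of e] by (cases "q e") (auto simp: lam_def hom_chart_def Infty_nbhd_def)
  qed
qed

lemma continuous_on_polyfun: "f \<in> polyfun \<Longrightarrow> continuous_on UNIV f"
proof (induction rule: polyfun.induct)
  case (xcoord e)
  show ?case by (intro continuous_on_fst continuous_on_product_coordinates)
next
  case (ycoord e)
  show ?case by (intro continuous_on_snd continuous_on_product_coordinates)
qed (auto intro: continuous_on_add continuous_on_mult)

lemma multihom_zero_iff_hom_chart:
  fixes f :: "('e::finite \<Rightarrow> real \<times> real) \<Rightarrow> real"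
  assumes "multihom f" and "q \<in> chart_domain p"
  shows "f (\<lambda>e. hom (q e)) = 0 \<longleftrightarrow> f (hom_chart p q) = 0"
proof -
  obtain d where d: "\<And>z lam. \<forall>e. lam e \<noteq> 0 \<Longrightarrow>
      f (\<lambda>e. (lam e * fst (z e), lam e * snd (z e))) = (\<Prod>e\<in>UNIV. lam e ^ d e) * f z"
    using assms(1) unfolding multihom_def by blast
  obtain lam where lam: "\<forall>e. lam e \<noteq> 0"
    and hom_q: "(\<lambda>e. hom (q e)) = (\<lambda>e. (lam e * fst (hom_chart p q e), lam e * snd (hom_chart p q e)))"
    using hom_eq_scaled_hom_chart[OF assms(2)] by blast
  have "f (\<lambda>e. hom (q e)) = (\<Prod>e\<in>UNIV. lam e ^ d e) * f (hom_chart p q)"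
    unfolding hom_q by (rule d[OF lam])
  moreover have "(\<Prod>e\<in>UNIV. lam e ^ d e) \<noteq> 0" using lam by simp
  ultimately show ?thesis by (metis mult_eq_0_iff)
qed

text \<open>Near \<open>p\<close>, \<open>hom\<close> differs from the continuous map \<open>hom_chart p\<close> by nonzero scalars in each
  coordinate, so by multihomogeneity the nonvanishing of \<open>f\<close> is an open condition.\<close>
lemma closed_multihom_zero_set:
  fixes f :: "('e::finite \<Rightarrow> real \<times> real) \<Rightarrow> real"
  assumes f: "multihom f"
  shows "closed {p. f (\<lambda>e. hom (p e)) = 0}"
  unfolding closed_def
proof (subst open_subopen, intro ballI)
  fix p assume p: "p \<in> - {p. f (\<lambda>e. hom (p e)) = 0}"
  let ?N = "chart_domain p \<inter> (f \<circ> hom_chart p) -` (- {0})"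
  have "continuous_on (chart_domain p) (f \<circ> hom_chart p)"
    using f by (intro continuous_on_compose continuous_on_hom_chart
        continuous_on_subset[OF continuous_on_polyfun]) (auto simp: multihom_def)
  then have "open ?N" by (intro continuous_open_preimage open_chart_domain) auto
  moreover have "p \<in> ?N" using p mem_chart_domain_self by (auto simp: hom_chart_self)
  moreover have "?N \<subseteq> - {p. f (\<lambda>e. hom (p e)) = 0}"
    using multihom_zero_iff_hom_chart[OF f] by auto
  ultimately show "\<exists>N. open N \<and> p \<in> N \<and> N \<subseteq> - {p. f (\<lambda>e. hom (p e)) = 0}" by blast
qed

lemma closed_zariski_closed:
  assumes "zariski_closed (Z :: ('e::finite \<Rightarrow> p1) set)" shows "closed Z"
proof -
  obtain P where P: "\<forall>f\<in>P. multihom f" "Z = {p. \<forall>f\<in>P. f (\<lambda>e. hom (p e)) = 0}"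
    using assms unfolding zariski_closed_def by blast
  have "Z = (\<Inter>f\<in>P. {p. f (\<lambda>e. hom (p e)) = 0})" using P(2) by auto
  then show ?thesis using P(1) closed_multihom_zero_set by auto
qed

lemma closure_subset_YV:
  assumes "A \<subseteq> V" shows "closure (emb ` A) \<subseteq> YV (V :: ('e::finite \<Rightarrow> real) set)"
proof (rule closure_minimal)
  show "emb ` A \<subseteq> YV V" using assms unfolding YV_def zariski_closure_def by auto
  show "closed (YV V)"
    unfolding YV_def zariski_closure_def by (auto intro: closed_zariski_closed)
qed

section \<open>Points of \<open>Y\<^sub>V\<close> with finite coordinates\<close>

lemma polyfun_sum: "finite A \<Longrightarrow> (\<And>i. i \<in> A \<Longrightarrow> f i \<in> polyfun) \<Longrightarrow> (\<lambda>z. \<Sum>i\<in>A. f i z) \<in> polyfun"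
  by (induction A rule: finite_induct) (auto intro: polyfun.intros)

lemma polyfun_prod: "finite A \<Longrightarrow> (\<And>i. i \<in> A \<Longrightarrow> f i \<in> polyfun) \<Longrightarrow> (\<lambda>z. \<Prod>i\<in>A. f i z) \<in> polyfun"
  by (induction A rule: finite_induct) (auto intro: polyfun.intros)

text \<open>The homogenisation of the linear form \<open>\<Sum>e\<in>G. c e * x e\<close>, of degree one in each
  coordinate of \<open>G\<close>.\<close>
definition hom_linear_form :: "'e set \<Rightarrow> ('e \<Rightarrow> real) \<Rightarrow> ('e \<Rightarrow> real \<times> real) \<Rightarrow> real" where
  "hom_linear_form G c z = (\<Sum>e\<in>G. c e * fst (z e) * (\<Prod>e'\<in>G - {e}. snd (z e')))"

lemma multihom_hom_linear_form: "multihom (hom_linear_form G c :: ('e::finite \<Rightarrow> real \<times> real) \<Rightarrow> real)"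
  unfolding multihom_def
proof (intro conjI exI[of _ "\<lambda>e. if e \<in> G then 1 else 0"] allI impI)
  show "hom_linear_form G c \<in> polyfun"
    unfolding hom_linear_form_def [abs_def]
    by (intro polyfun_sum polyfun_prod polyfun.intros) auto
next
  fix z and lam :: "'e \<Rightarrow> real"
  have "hom_linear_form G c (\<lambda>e. (lam e * fst (z e), lam e * snd (z e)))
      = (\<Sum>e\<in>G. (lam e * (\<Prod>e'\<in>G - {e}. lam e')) * (c e * fst (z e) * (\<Prod>e'\<in>G - {e}. snd (z e'))))"
    unfolding hom_linear_form_def by (intro sum.cong refl) (simp add: prod.distrib algebra_simps)
  also have "\<dots> = (\<Prod>e\<in>G. lam e) * hom_linear_form G c z"
    by (simp add: hom_linear_form_def sum_distrib_left prod.remove[symmetric])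
  also have "(\<Prod>e\<in>G. lam e) = (\<Prod>e\<in>UNIV. lam e ^ (if e \<in> G then 1 else 0))"
    by (simp add: prod.If_cases if_distrib[of "\<lambda>n. lam _ ^ n"] cong: if_cong)
  finally show "hom_linear_form G c (\<lambda>e. (lam e * fst (z e), lam e * snd (z e)))
      = (\<Prod>e\<in>UNIV. lam e ^ (if e \<in> G then 1 else 0)) * hom_linear_form G c z" .
qed

lemma hom_linear_form_Fin:
  assumes "\<forall>e\<in>G. p e = Fin (u e)"
  shows "hom_linear_form G c (\<lambda>e. hom (p e)) = (\<Sum>e\<in>G. c e * u e)"
  unfolding hom_linear_form_def using assms by (intro sum.cong refl) simp

lemma multihom_vanishes_on_YV:
  assumes "multihom f" and "\<forall>v\<in>V. f (\<lambda>e. hom (Fin (v e))) = 0" and "p \<in> YV V"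
  shows "f (\<lambda>e. hom (p e)) = 0"
proof -
  have "zariski_closed {q. \<forall>g\<in>{f}. g (\<lambda>e. hom (q e)) = 0}"
    unfolding zariski_closed_def using assms(1) by blast
  moreover have "emb ` V \<subseteq> {q. \<forall>g\<in>{f}. g (\<lambda>e. hom (q e)) = 0}"
    using assms(2) by (auto simp: emb_def)
  ultimately show ?thesis
    using assms(3) unfolding YV_def zariski_closure_def by blast
qed

lemma mem_subspace_if_orthogonal_comp:
  fixes U :: "'a::euclidean_space set"
  assumes "subspace U" and "\<And>z. \<forall>w\<in>U. z \<bullet> w = 0 \<Longrightarrow> z \<bullet> u = 0"
  shows "u \<in> U"
proof -
  have "u \<in> U\<^sup>\<bottom>\<^sup>\<bottom>"
    using assms(2) by (auto simp: orthogonal_comp_def orthogonal_def inner_commute)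
  then show ?thesis by (simp add: orthogonal_comp_self[OF assms(1)])
qed

lemma lin_subspace_add: "lin_subspace V \<Longrightarrow> v \<in> V \<Longrightarrow> w \<in> V \<Longrightarrow> (\<lambda>e. v e + w e) \<in> V"
  by (simp add: lin_subspace_def)

lemma lin_subspace_scale: "lin_subspace V \<Longrightarrow> v \<in> V \<Longrightarrow> (\<lambda>e. c * v e) \<in> V"
  by (simp add: lin_subspace_def)

definition restrict_vec :: "'e set \<Rightarrow> ('e::finite \<Rightarrow> real) \<Rightarrow> real ^ 'e" where
  "restrict_vec G v = (\<chi> e. if e \<in> G then v e else 0)"

lemma inner_restrict_vec: "z \<bullet> restrict_vec G v = (\<Sum>e\<in>G. z $ e * v e)"
  by (simp add: inner_vec_def restrict_vec_def if_distrib[of "\<lambda>x. _ * x"] sum.If_cases cong: if_cong)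

lemma subspace_restrict_vec_image:
  assumes V: "lin_subspace V"
  shows "subspace (restrict_vec G ` V)"
  unfolding subspace_def
proof (intro conjI ballI allI)
  show "0 \<in> restrict_vec G ` V"
    using V unfolding lin_subspace_def
    by (intro image_eqI[of _ _ "\<lambda>_. 0"]) (auto simp: restrict_vec_def vec_eq_iff)
  show "x + y \<in> restrict_vec G ` V" if "x \<in> restrict_vec G ` V" "y \<in> restrict_vec G ` V" for x y
    using that lin_subspace_add[OF V]
    by (auto intro!: image_eqI[of _ _ "\<lambda>e. _ e + _ e"] simp: restrict_vec_def vec_eq_iff)
  show "c *\<^sub>R x \<in> restrict_vec G ` V" if "x \<in> restrict_vec G ` V" for c x
    using that lin_subspace_scale[OF V]
    by (auto intro!: image_eqI[of _ _ "\<lambda>e. c * _ e"] simp: restrict_vec_def vec_eq_iff)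
qed

text \<open>Otherwise some linear form on \<open>\<real>\<^sup>G\<close> vanishes on \<open>\<pi>\<^sub>G(V)\<close> but not at the point, and its
  homogenisation cuts out a Zariski closed set containing \<open>V\<close> but not the point.\<close>
lemma YV_finite_coords_in_V:
  fixes V :: "('e::finite \<Rightarrow> real) set"
  assumes V: "lin_subspace V" and p: "p \<in> YV V" and G: "\<forall>e\<in>G. p e \<noteq> Infty"
  shows "\<exists>v\<in>V. \<forall>e\<in>G. p e = Fin (v e)"
proof -
  define u where "u e = (case p e of Fin x \<Rightarrow> x | Infty \<Rightarrow> 0)" for e
  have u: "\<forall>e\<in>G. p e = Fin (u e)"
    using G by (auto simp: u_def split: p1.split)
  have "restrict_vec G u \<in> restrict_vec G ` V"
  proof (rule mem_subspace_if_orthogonal_comp[OF subspace_restrict_vec_image[OF V]])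
    fix z assume z: "\<forall>w\<in>restrict_vec G ` V. z \<bullet> w = 0"
    have "hom_linear_form G (($) z) (\<lambda>e. hom (Fin (v e))) = z \<bullet> restrict_vec G v" for v
      using hom_linear_form_Fin[of G "\<lambda>e. Fin (v e)" v] by (simp add: inner_restrict_vec)
    then have "\<forall>v\<in>V. hom_linear_form G (($) z) (\<lambda>e. hom (Fin (v e))) = 0"
      using z by simp
    then have "hom_linear_form G (($) z) (\<lambda>e. hom (p e)) = 0"
      using multihom_vanishes_on_YV[OF multihom_hom_linear_form _ p] by blast
    then show "z \<bullet> restrict_vec G u = 0" by (simp add: hom_linear_form_Fin[OF u] inner_restrict_vec)
  qed
  then obtain v where "v \<in> V" "restrict_vec G u = restrict_vec G v" by blast
  then have "\<forall>e\<in>G. u e = v e" by (metis (mono_tags) restrict_vec_def vec_lambda_beta)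
  then show ?thesis using u \<open>v \<in> V\<close> by auto
qed

section \<open>Limits of curves in \<open>(\<real>\<PP>\<^sup>1)\<^sup>E\<close>\<close>

lemma tendsto_fun_iff:
  fixes f :: "'a \<Rightarrow> 'i \<Rightarrow> 'b::topological_space"
  shows "(f \<longlongrightarrow> l) F \<longleftrightarrow> (\<forall>i. ((\<lambda>x. f x i) \<longlongrightarrow> l i) F)"
proof -
  have "(f \<longlongrightarrow> l) F \<longleftrightarrow> limitin (product_topology (\<lambda>i. euclidean) UNIV) f l F"
    by (simp add: euclidean_product_topology)
  also have "\<dots> \<longleftrightarrow> (\<forall>i. ((\<lambda>x. f x i) \<longlongrightarrow> l i) F)"
    by (simp add: limitin_componentwise)
  finally show ?thesis .
qed

lemma tendsto_Fin:
  assumes "(f \<longlongrightarrow> l) F"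
  shows "((\<lambda>x. Fin (f x)) \<longlongrightarrow> Fin l) F"
proof (rule topological_tendstoI)
  fix S assume "open S" "Fin l \<in> S"
  then have "open (Fin -` S)" "l \<in> Fin -` S" by (auto simp: open_p1_def)
  then have "eventually (\<lambda>x. f x \<in> Fin -` S) F" using assms topological_tendstoD by blast
  then show "eventually (\<lambda>x. Fin (f x) \<in> S) F" by simp
qed

lemma tendsto_Fin_Infty:
  assumes "\<And>R. eventually (\<lambda>x. R < \<bar>f x\<bar>) F"
  shows "((\<lambda>x. Fin (f x)) \<longlongrightarrow> Infty) F"
proof (rule topological_tendstoI)
  fix S assume "open S" "Infty \<in> S"
  then obtain R where "\<forall>x. R < \<bar>x\<bar> \<longrightarrow> Fin x \<in> S" by (auto simp: open_p1_def)
  then show "eventually (\<lambda>x. Fin (f x) \<in> S) F" using assms[of R] by (auto elim: eventually_mono)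
qed

definition curve :: "('e \<Rightarrow> real) \<Rightarrow> ('e \<Rightarrow> real) \<Rightarrow> ('e \<Rightarrow> real) \<Rightarrow> real \<Rightarrow> 'e \<Rightarrow> real" where
  "curve v w s t = (\<lambda>e. v e + t * w e + s e / t)"

lemma curve_mem:
  assumes "lin_subspace V" "v \<in> V" "w \<in> V" "s \<in> V"
  shows "curve v w s t \<in> V"
proof -
  have "(\<lambda>e. v e + t * w e + (1 / t) * s e) \<in> V"
    by (intro lin_subspace_add lin_subspace_scale assms)
  then show ?thesis by (simp add: curve_def)
qed

lemma tendsto_Fin_curve_coord:
  fixes v w s :: real
  shows "((\<lambda>t. Fin (v + t * w + s / t)) \<longlongrightarrow> (if w = 0 then Fin v else Infty)) at_top"
proof (cases "w = 0")
  case True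
  have "((\<lambda>t. v + s / t) \<longlongrightarrow> v) at_top" by real_asymp
  then have "((\<lambda>t. Fin (v + s / t)) \<longlongrightarrow> Fin v) at_top" by (rule tendsto_Fin)
  with True show ?thesis by simp
next
  case False
  have "eventually (\<lambda>t. R < \<bar>v + t * w + s / t\<bar>) at_top" for R
  proof (cases "w > 0")
    case True
    then have "eventually (\<lambda>t. R < v + t * w + s / t) at_top" by real_asymp
    then show ?thesis by (rule eventually_mono) linarith
  next
    case False
    with \<open>w \<noteq> 0\<close> have "w < 0" by simp
    then have "eventually (\<lambda>t. v + t * w + s / t < - R) at_top" by real_asymp
    then show ?thesis by (rule eventually_mono) linarith
  qed
  then have "((\<lambda>t. Fin (v + t * w + s / t)) \<longlongrightarrow> Infty) at_top" by (rule tendsto_Fin_Infty)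
  with False show ?thesis by simp
qed

lemma curve_limit_mem_closure:
  assumes "eventually (\<lambda>t. curve v w s t \<in> A) at_top"
  shows "(\<lambda>e. if w e = 0 then Fin (v e) else Infty) \<in> closure (emb ` A)"
proof (rule Lim_in_closed_set[where F = at_top and f = "\<lambda>t. emb (curve v w s t)"])
  show "((\<lambda>t. emb (curve v w s t)) \<longlongrightarrow> (\<lambda>e. if w e = 0 then Fin (v e) else Infty)) at_top"
    unfolding tendsto_fun_iff emb_def curve_def by (blast intro: tendsto_Fin_curve_coord)
  show "eventually (\<lambda>t. emb (curve v w s t) \<in> closure (emb ` A)) at_top"
    using assms by (rule eventually_mono) (intro closure_subset[THEN subsetD] imageI)
qed simp_all

section \<open>Sign vectors\<close>

lemma sign_of_simps:
  "sign_of x = Pos \<longleftrightarrow> x > 0" "sign_of x = Neg \<longleftrightarrow> x < 0" "sign_of x = Zer \<longleftrightarrow> x = 0"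
  by (auto simp: sign_of_def)

lemma signmap_apply [simp]: "signmap v e = sign_of (v e)"
  by (simp add: signmap_def)

lemma zer_signmap: "zer (signmap v) = {e. v e = 0}"
  by (auto simp: zer_def sign_of_simps)

lemma pos_signmap: "pos (signmap v) = {e. v e > 0}"
  by (auto simp: pos_def sign_of_simps)

lemma neg_signmap: "neg (signmap v) = {e. v e < 0}"
  by (auto simp: neg_def sign_of_simps)

lemma sle_trans: "sle X Y \<Longrightarrow> sle Y Z \<Longrightarrow> sle X Z"
  by (auto simp: sle_def)

lemma sle_eq: "sle X Y \<Longrightarrow> X e \<noteq> Zer \<Longrightarrow> Y e = X e"
  by (cases "X e") (auto simp: sle_def pos_def neg_def)

lemma zer_antimono:
  assumes "sle X Y" shows "zer Y \<subseteq> zer X"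
proof
  fix e assume "e \<in> zer Y"
  then show "e \<in> zer X" using sle_eq[OF assms, of e] by (cases "X e") (auto simp: zer_def)
qed

lemma sle_zer_eq_imp_eq:
  assumes "sle X Y" and "zer Y = zer X"
  shows "Y = X"
proof
  fix e show "Y e = X e"
  proof (cases "X e = Zer")
    case True
    then have "e \<in> zer Y" using assms(2) by (simp add: zer_def)
    then show ?thesis using True by (simp add: zer_def)
  qed (rule sle_eq[OF assms(1)])
qed

definition sign_comp :: "('e \<Rightarrow> sgn) \<Rightarrow> ('e \<Rightarrow> sgn) \<Rightarrow> 'e \<Rightarrow> sgn" where
  "sign_comp X Y = (\<lambda>e. if X e = Zer then Y e else X e)"

lemma sle_sign_comp: "sle X (sign_comp X Y)"
  by (auto simp: sle_def pos_def neg_def sign_comp_def)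

lemma zer_sign_comp: "zer (sign_comp X Y) = zer X \<inter> zer Y"
  by (auto simp: zer_def sign_comp_def)

lemma restr_sign_comp: "restr G (sign_comp X Y) = sign_comp (restr G X) (restr G Y)"
  by (auto simp: restr_def sign_comp_def)

lemma eventually_sign_of_curve_coord:
  fixes v w s :: real
  shows "eventually (\<lambda>t. sign_of (v + t * w + s / t) =
    (if w = 0 then if v = 0 then sign_of s else sign_of v else sign_of w)) at_top"
proof -
  consider "w > 0" | "w < 0" | "w = 0" "v > 0" | "w = 0" "v < 0"
    | "w = 0" "v = 0" "s > 0" | "w = 0" "v = 0" "s < 0" | "w = 0" "v = 0" "s = 0"
    by linarith
  then show ?thesis
  proof cases
    case 1
    then have "eventually (\<lambda>t. 0 < v + t * w + s / t) at_top" by real_asymp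
    then show ?thesis using 1 by (auto simp: sign_of_def elim!: eventually_mono)
  next
    case 2
    then have "eventually (\<lambda>t. v + t * w + s / t < 0) at_top" by real_asymp
    then show ?thesis using 2 by (auto simp: sign_of_def elim!: eventually_mono)
  next
    case 3
    then have "eventually (\<lambda>t. 0 < v + s / t) at_top" by real_asymp
    then show ?thesis using 3 by (auto simp: sign_of_def elim!: eventually_mono)
  next
    case 4
    then have "eventually (\<lambda>t. v + s / t < 0) at_top" by real_asymp
    then show ?thesis using 4 by (auto simp: sign_of_def elim!: eventually_mono)
  next
    case 5
    then have "eventually (\<lambda>t. 0 < s / t) at_top" by real_asymp
    then show ?thesis using 5 by (auto simp: sign_of_def elim!: eventually_mono)
  next
    case 6
    then have "eventually (\<lambda>t. s / t < 0) at_top" by real_asymp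
    then show ?thesis using 6 by (auto simp: sign_of_def elim!: eventually_mono)
  qed (simp add: sign_of_def)
qed

lemma eventually_signmap_curve:
  fixes v w s :: "'e::finite \<Rightarrow> real"
  shows "eventually (\<lambda>t. signmap (curve v w s t) =
    sign_comp (signmap w) (sign_comp (signmap v) (signmap s))) at_top"
proof -
  have "eventually (\<lambda>t. \<forall>e. signmap (curve v w s t) e =
      sign_comp (signmap w) (sign_comp (signmap v) (signmap s)) e) at_top"
  proof (rule eventually_all_finite)
    fix e
    show "eventually (\<lambda>t. signmap (curve v w s t) e =
        sign_comp (signmap w) (sign_comp (signmap v) (signmap s)) e) at_top"
      unfolding curve_def sign_comp_def signmap_apply sign_of_simps
      by (rule eventually_sign_of_curve_coord)
  qed
  then show ?thesis by (simp add: fun_eq_iff)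
qed

lemma sign_comp_mem_covectors:
  fixes V :: "('e::finite \<Rightarrow> real) set"
  assumes V: "lin_subspace V" and "X \<in> covectors V" "Y \<in> covectors V"
  shows "sign_comp X Y \<in> covectors V"
proof -
  obtain x y where xy: "x \<in> V" "y \<in> V" "X = signmap x" "Y = signmap y"
    using assms(2,3) by (auto simp: covectors_def)
  have "(\<lambda>_. 0) \<in> V" using V by (simp add: lin_subspace_def)
  then have "eventually (\<lambda>t. curve y x (\<lambda>_. 0) t \<in> V \<and>
      signmap (curve y x (\<lambda>_. 0) t) = sign_comp X Y) at_top"
    using eventually_signmap_curve[of y x "\<lambda>_. 0"] curve_mem[OF V xy(2,1)]
    by (auto simp: xy(3,4) sign_comp_def sign_of_def elim!: eventually_mono)
  then obtain t where "curve y x (\<lambda>_. 0) t \<in> V" "signmap (curve y x (\<lambda>_. 0) t) = sign_comp X Y"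
    using eventually_happens'[OF trivial_limit_at_top_linorder] by blast
  then show ?thesis unfolding covectors_def by (metis image_eqI)
qed

lemma zer_subset_if_maximal:
  assumes "sign_comp T Y \<in> A" and "\<forall>Z\<in>A. sle T Z \<longrightarrow> Z = T"
  shows "zer T \<subseteq> zer Y"
proof -
  have comp_eq: "sign_comp T Y = T" using assms sle_sign_comp by blast
  show ?thesis
  proof
    fix e assume "e \<in> zer T"
    then have "T e = Zer" by (simp add: zer_def)
    then have "Y e = sign_comp T Y e" by (simp add: sign_comp_def)
    with comp_eq \<open>T e = Zer\<close> show "e \<in> zer Y" by (simp add: zer_def)
  qed
qed

lemma zer_tope_subset:
  fixes V :: "('e::finite \<Rightarrow> real) set"
  assumes "lin_subspace V" "T \<in> topes V" "Y \<in> covectors V"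
  shows "zer T \<subseteq> zer Y"
  using assms sign_comp_mem_covectors
  by (intro zer_subset_if_maximal[where A = "covectors V"]) (auto simp: topes_def)

lemma exists_tope_above:
  fixes V :: "('e::finite \<Rightarrow> real) set"
  assumes "X \<in> covectors V"
  shows "\<exists>T\<in>topes V. sle X T"
proof -
  obtain T where T: "T \<in> covectors V" "sle X T"
    and min: "\<And>Z. Z \<in> covectors V \<and> sle X Z \<Longrightarrow> card (zer T) \<le> card (zer Z)"
    using ex_has_least_nat[of "\<lambda>Z. Z \<in> covectors V \<and> sle X Z" X "\<lambda>Z. card (zer Z)"] assms
    by (auto simp: sle_def)
  have "Z = T" if "Z \<in> covectors V" "sle T Z" for Z
  proof (rule sle_zer_eq_imp_eq[OF \<open>sle T Z\<close>])
    have "zer Z \<subseteq> zer T" using \<open>sle T Z\<close> by (rule zer_antimono)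
    moreover have "card (zer T) \<le> card (zer Z)" using min that sle_trans[OF T(2)] by blast
    ultimately show "zer Z = zer T" by (simp add: card_seteq)
  qed
  then show ?thesis using T by (auto simp: topes_def)
qed

lemma minor_covector_zero: "X \<in> minor_covectors V F G \<Longrightarrow> e \<notin> G - F \<Longrightarrow> X e = Zer"
  by (auto simp: minor_covectors_def restr_def zer_def)

lemma restr_minor_covector: "X \<in> minor_covectors V F G \<Longrightarrow> restr (G - F) X = X"
  by (auto simp: restr_def fun_eq_iff dest: minor_covector_zero)

lemma sign_comp_mem_minor_covectors:
  fixes V :: "('e::finite \<Rightarrow> real) set"
  assumes V: "lin_subspace V" and "X \<in> minor_covectors V F G" "Y \<in> minor_covectors V F G"
  shows "sign_comp X Y \<in> minor_covectors V F G"
proof -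
  obtain X' Y' where XY: "X = restr G X'" "Y = restr G Y'" "X' \<in> covectors V" "Y' \<in> covectors V"
    "F \<subseteq> zer X'" "F \<subseteq> zer Y'"
    using assms(2,3) by (auto simp: minor_covectors_def)
  have "sign_comp X' Y' \<in> covectors V" using sign_comp_mem_covectors[OF V XY(3,4)] .
  moreover have "F \<subseteq> zer (sign_comp X' Y')" using XY(5,6) by (simp add: zer_sign_comp)
  ultimately show ?thesis
    unfolding minor_covectors_def XY(1,2) restr_sign_comp[symmetric] by blast
qed

lemma minor_tope_nonzero:
  fixes V :: "('e::finite \<Rightarrow> real) set"
  assumes V: "lin_subspace V" and F: "F \<in> flats V" and T: "T \<in> minor_topes V F G"
    and e: "e \<in> G - F"
  shows "T e \<noteq> Zer"
proof -
  obtain Y where Y: "Y \<in> covectors V" "zer Y = F" using F by (auto simp: flats_def)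
  have "restr G Y \<in> minor_covectors V F G" using Y by (auto simp: minor_covectors_def)
  then have "zer T \<subseteq> zer (restr G Y)"
    using T sign_comp_mem_minor_covectors[OF V]
    by (intro zer_subset_if_maximal[where A = "minor_covectors V F G"]) (auto simp: minor_topes_def)
  moreover have "e \<notin> zer (restr G Y)" using e Y(2) by (auto simp: zer_def restr_def)
  ultimately show ?thesis by (auto simp: zer_def)
qed

section \<open>Triples and cells\<close>

lemma pos_restr: "pos (restr A X) = A \<inter> pos X"
  by (auto simp: pos_def restr_def)

lemma neg_restr: "neg (restr A X) = A \<inter> neg X"
  by (auto simp: neg_def restr_def)

definition cell_of_triple :: "'e set \<times> 'e set \<times> ('e \<Rightarrow> sgn) \<Rightarrow> 'e set \<times> 'e set \<times> ('e \<Rightarrow> sgn)" where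
  "cell_of_triple = (\<lambda>(I, J, S). (I, J, restr (J - I) S))"

lemma sim_eq_kernel_cell_of_triple:
  "sim V = {(x, y). x \<in> triples V \<and> y \<in> triples V \<and> cell_of_triple x = cell_of_triple y}"
  by (auto simp: sim_def cell_of_triple_def)

lemma restr_tope_mem_minor_topes:
  fixes V :: "('e::finite \<Rightarrow> real) set"
  assumes V: "lin_subspace V" and tr: "(I, J, S) \<in> triples V"
  shows "restr (J - I) S \<in> minor_topes V I J"
proof -
  have S: "S \<in> topes V" and "rel_acyclic V I S" using tr by (auto simp: triples_def)
  then obtain X where X: "X \<in> covectors V" "sle X S" "zer X = I" by (auto simp: rel_acyclic_def)
  have S_nonzero: "S e \<noteq> Zer" if "e \<in> J - I" for e
    using zer_tope_subset[OF V S X(1)] X(3) that by (auto simp: zer_def)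
  have "restr J X = restr (J - I) S"
  proof
    fix e show "restr J X e = restr (J - I) S e"
      using X(3) sle_eq[OF X(2), of e] by (cases "e \<in> I") (auto simp: restr_def zer_def)
  qed
  then have mem: "restr (J - I) S \<in> minor_covectors V I J"
    unfolding minor_covectors_def using X(1,3) by (intro CollectI exI[of _ X]) auto
  have "Y = restr (J - I) S" if Y: "Y \<in> minor_covectors V I J" "sle (restr (J - I) S) Y" for Y
  proof
    fix e show "Y e = restr (J - I) S e"
      using minor_covector_zero[OF Y(1)] sle_eq[OF Y(2), of e] S_nonzero
      by (cases "e \<in> J - I") (auto simp: restr_def)
  qed
  then show ?thesis using mem by (auto simp: minor_topes_def)
qed

lemma exists_triple_of_cell:
  fixes V :: "('e::finite \<Rightarrow> real) set"
  assumes V: "lin_subspace V" and ci: "(F, G, T) \<in> cell_index V"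
  shows "\<exists>S. (F, G, S) \<in> triples V \<and> restr (G - F) S = T"
proof -
  have F: "F \<in> flats V" and G: "G \<in> flats V" and "F \<subseteq> G" and T: "T \<in> minor_topes V F G"
    using ci by (auto simp: cell_index_def)
  obtain X where X: "X \<in> covectors V" "F \<subseteq> zer X" "T = restr G X"
    using T by (auto simp: minor_topes_def minor_covectors_def)
  obtain Y where Y: "Y \<in> covectors V" "zer Y = G" using G by (auto simp: flats_def)
  define Z where "Z = sign_comp Y X"
  have Z: "Z \<in> covectors V" unfolding Z_def using sign_comp_mem_covectors[OF V Y(1) X(1)] .
  have T_Z: "T e = Z e" if "e \<in> G" for e
    using that Y(2) X(3) by (auto simp: Z_def sign_comp_def restr_def zer_def)
  have T_nonzero: "T e \<noteq> Zer" if "e \<in> G - F" for e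
    using minor_tope_nonzero[OF V F T that] .
  have "zer Z = G \<inter> zer X" by (simp add: Z_def zer_sign_comp Y(2))
  also have "\<dots> = F" using \<open>F \<subseteq> G\<close> X(2,3) T_nonzero by (auto simp: zer_def restr_def)
  finally have "zer Z = F" .
  obtain S where S: "S \<in> topes V" "sle Z S" using exists_tope_above[OF Z] by blast
  have "rel_acyclic V F S" using Z S(2) \<open>zer Z = F\<close> by (auto simp: rel_acyclic_def)
  moreover have "rel_acyclic V G S"
    using Y sle_trans[OF sle_sign_comp S(2)[unfolded Z_def]] by (auto simp: rel_acyclic_def)
  moreover have "restr (G - F) S = T"
  proof
    fix e show "restr (G - F) S e = T e"
      using T_Z T_nonzero sle_eq[OF S(2), of e] minor_covector_zero[of T V F G e] T
      by (cases "e \<in> G - F") (auto simp: restr_def minor_topes_def)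
  qed
  ultimately show ?thesis using S(1) F G \<open>F \<subseteq> G\<close> by (auto simp: triples_def)
qed

lemma image_cell_of_triple:
  fixes V :: "('e::finite \<Rightarrow> real) set"
  assumes V: "lin_subspace V"
  shows "cell_of_triple ` triples V = cell_index V"
proof
  show "cell_of_triple ` triples V \<subseteq> cell_index V"
    using restr_tope_mem_minor_topes[OF V]
    by (auto simp: cell_of_triple_def cell_index_def triples_def)
  show "cell_index V \<subseteq> cell_of_triple ` triples V"
  proof (clarify)
    fix F G T assume "(F, G, T) \<in> cell_index V"
    then obtain S where "(F, G, S) \<in> triples V" "restr (G - F) S = T"
      using exists_triple_of_cell[OF V] by blast
    then show "(F, G, T) \<in> cell_of_triple ` triples V"
      by (force simp: cell_of_triple_def)
  qed
qed

lemma cellY_nonempty: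
  fixes V :: "('e::finite \<Rightarrow> real) set"
  assumes V: "lin_subspace V" and ci: "(F, G, T) \<in> cell_index V"
  shows "cellY V F G T \<noteq> {}"
proof -
  have G: "G \<in> flats V" and "F \<subseteq> G" and T: "T \<in> minor_topes V F G"
    using ci by (auto simp: cell_index_def)
  obtain x where x: "x \<in> V" "F \<subseteq> zer (signmap x)" "T = restr G (signmap x)"
    using T by (auto simp: minor_topes_def minor_covectors_def covectors_def)
  obtain g where g: "g \<in> V" "zer (signmap g) = G" using G by (auto simp: flats_def covectors_def)
  define p where "p = (\<lambda>e. if g e = 0 then Fin (x e) else Infty)"
  have "(\<lambda>_. 0) \<in> V" using V by (simp add: lin_subspace_def)
  then have "eventually (\<lambda>t. curve x g (\<lambda>_. 0) t \<in> V) at_top"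
    using curve_mem[OF V x(1) g(1)] by simp
  then have "p \<in> closure (emb ` V)" unfolding p_def by (rule curve_limit_mem_closure)
  then have "p \<in> YV V" using closure_subset_YV by blast
  then have "p \<in> cellY V F G T"
    using x g(2) \<open>F \<subseteq> G\<close>
    by (auto simp: cellY_def p_def pos_restr neg_restr pos_signmap neg_signmap zer_signmap)
  then show ?thesis by blast
qed

fun p1_sign :: "p1 \<Rightarrow> sgn" where
  "p1_sign (Fin x) = sign_of x"
| "p1_sign Infty = Zer"

lemma cellY_determines_index:
  fixes V :: "('e::finite \<Rightarrow> real) set"
  assumes V: "lin_subspace V" and ci: "(F, G, T) \<in> cell_index V" and p: "p \<in> cellY V F G T"
  shows "F = {e. p e = Fin 0} \<and> G = {e. p e \<noteq> Infty} \<and> T = (\<lambda>e. p1_sign (p e))"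
proof -
  have F: "F \<in> flats V" "F \<subseteq> G" and T: "T \<in> minor_topes V F G"
    using ci by (auto simp: cell_index_def)
  have "(e \<in> F \<longleftrightarrow> p e = Fin 0) \<and> (e \<in> G \<longleftrightarrow> p e \<noteq> Infty) \<and> T e = p1_sign (p e)" for e
  proof (cases "e \<in> G - F")
    case True
    have "T e \<noteq> Zer" using minor_tope_nonzero[OF V F(1) T True] .
    then show ?thesis
      using True p by (cases "T e") (auto simp: cellY_def pos_def neg_def sign_of_def)
  next
    case False
    then have "T e = Zer" using T by (auto simp: minor_topes_def intro: minor_covector_zero)
    then show ?thesis using False F(2) p by (auto simp: cellY_def sign_of_def)
  qed
  then show ?thesis by auto
qed

lemma inj_on_cellY:
  fixes V :: "('e::finite \<Rightarrow> real) set"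
  assumes V: "lin_subspace V"
  shows "inj_on (\<lambda>(F, G, T). cellY V F G T) (cell_index V)"
proof (rule inj_onI)
  fix c c' assume ci: "c \<in> cell_index V" and ci': "c' \<in> cell_index V"
    and eq: "(case c of (F, G, T) \<Rightarrow> cellY V F G T) = (case c' of (F, G, T) \<Rightarrow> cellY V F G T)"
  obtain F G T where c: "c = (F, G, T)" by (rule prod_cases3)
  obtain F' G' T' where c': "c' = (F', G', T')" by (rule prod_cases3)
  obtain p where p: "p \<in> cellY V F G T" using cellY_nonempty[OF V] ci c by blast
  then have p': "p \<in> cellY V F' G' T'" using eq c c' by simp
  show "c = c'"
    using cellY_determines_index[OF V _ p] cellY_determines_index[OF V _ p'] ci ci' c c' by simp
qed

text \<open>\<open>p\<close> is the limit of the curve \<open>v + t w + s / t\<close>, which eventually lies in the cone of \<open>S\<close>;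
  here \<open>v \<in> V\<close> agrees with \<open>p\<close> where \<open>p\<close> is finite and \<open>s\<close> realises \<open>S\<close>.\<close>
lemma mem_SY_if_conformal:
  fixes V :: "('e::finite \<Rightarrow> real) set"
  assumes V: "lin_subspace V" and S: "S \<in> covectors V"
    and w: "w \<in> V" "sle (signmap w) S"
    and p: "p \<in> YV V" "\<And>e. p e = Infty \<longleftrightarrow> w e \<noteq> 0"
    and conformal: "\<And>e x. p e = Fin x \<Longrightarrow> x = 0 \<or> sign_of x = S e"
  shows "p \<in> SY V S"
proof -
  obtain s where s: "s \<in> V" "signmap s = S" using S by (auto simp: covectors_def)
  have "\<forall>e\<in>{e. w e = 0}. p e \<noteq> Infty" using p(2) by simp
  then obtain v where v: "v \<in> V" "\<forall>e\<in>{e. w e = 0}. p e = Fin (v e)"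
    using YV_finite_coords_in_V[OF V p(1)] by blast
  have p_eq: "p = (\<lambda>e. if w e = 0 then Fin (v e) else Infty)"
  proof
    fix e show "p e = (if w e = 0 then Fin (v e) else Infty)" using v(2) p(2)[of e] by auto
  qed
  have "sign_comp (signmap w) (sign_comp (signmap v) S) = S"
  proof
    fix e show "sign_comp (signmap w) (sign_comp (signmap v) S) e = S e"
      using sle_eq[OF w(2), of e] conformal[of e "v e"] v(2)
      by (auto simp: sign_comp_def sign_of_simps)
  qed
  then have "eventually (\<lambda>t. curve v w s t \<in> V \<inter> signmap -` {S}) at_top"
    using eventually_signmap_curve[of v w s] curve_mem[OF V v(1) w(1) s(1)] s(2)
    by (auto elim!: eventually_mono)
  then show ?thesis unfolding SY_def p_eq by (rule curve_limit_mem_closure)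
qed

lemma cellY_eq_cellSY:
  fixes V :: "('e::finite \<Rightarrow> real) set"
  assumes V: "lin_subspace V" and tr: "(I, J, S) \<in> triples V"
  shows "cellY V I J (restr (J - I) S) = cellSY V S I J"
proof -
  have S: "S \<in> topes V" and I: "I \<in> flats V" and "rel_acyclic V J S"
    using tr by (auto simp: triples_def)
  then obtain w where w: "w \<in> V" "sle (signmap w) S" "zer (signmap w) = J"
    by (auto simp: rel_acyclic_def covectors_def)
  have S_nonzero: "S e \<noteq> Zer" if "e \<in> J - I" for e
    using zer_tope_subset[OF V S] I that by (auto simp: flats_def zer_def)
  define C where "C = {p :: 'e \<Rightarrow> p1. (\<forall>e\<in>I. p e = Fin 0)
      \<and> (\<forall>e\<in>(J - I) \<inter> pos S. \<exists>x>0. p e = Fin x)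
      \<and> (\<forall>e\<in>(J - I) \<inter> neg S. \<exists>x<0. p e = Fin x)
      \<and> (\<forall>e. e \<notin> J \<longrightarrow> p e = Infty)}"
  have "p \<in> SY V S" if p: "p \<in> YV V" "p \<in> C" for p
  proof (rule mem_SY_if_conformal[OF V _ w(1,2) p(1)])
    have C: "\<forall>e\<in>I. p e = Fin 0" "\<forall>e\<in>(J - I) \<inter> pos S. \<exists>x>0. p e = Fin x"
      "\<forall>e\<in>(J - I) \<inter> neg S. \<exists>x<0. p e = Fin x" "\<forall>e. e \<notin> J \<longrightarrow> p e = Infty"
      using p(2) by (simp_all add: C_def)
    have p_J: "\<exists>x. p e = Fin x \<and> (x = 0 \<or> sign_of x = S e)" if "e \<in> J" for e
    proof (cases "S e")
      case Zer
      then have "e \<in> I" using S_nonzero that by blast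
      then show ?thesis using C(1) by auto
    next
      case Pos
      then have "e \<in> I \<or> (\<exists>x>0. p e = Fin x)" using C(2) that unfolding pos_def by blast
      then show ?thesis using C(1) Pos by (auto simp: sign_of_simps)
    next
      case Neg
      then have "e \<in> I \<or> (\<exists>x<0. p e = Fin x)" using C(3) that unfolding neg_def by blast
      then show ?thesis using C(1) Neg by (auto simp: sign_of_simps)
    qed
    have J_iff: "e \<in> J \<longleftrightarrow> w e = 0" for e using w(3) by (auto simp: zer_signmap)
    show "S \<in> covectors V" using S by (simp add: topes_def)
    show "p e = Infty \<longleftrightarrow> w e \<noteq> 0" for e
      using p_J[of e] C(4) J_iff[of e] by auto
    show "x = 0 \<or> sign_of x = S e" if "p e = Fin x" for e x
      using p_J[of e] C(4) that by (cases "e \<in> J") auto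
  qed
  moreover have "SY V S \<subseteq> YV V" unfolding SY_def by (rule closure_subset_YV) auto
  ultimately have "YV V \<inter> C = SY V S \<inter> C" by blast
  then show ?thesis by (simp add: cellY_def cellSY_def C_def pos_restr neg_restr)
qed

lemma cellY_eq_cellSY_iff:
  fixes V :: "('e::finite \<Rightarrow> real) set"
  assumes V: "lin_subspace V" and tr: "(I, J, S) \<in> triples V" and ci: "(F, G, T) \<in> cell_index V"
  shows "cellY V F G T = cellSY V S I J \<longleftrightarrow> (F, G) = (I, J) \<and> restr (G - F) S = restr (G - F) T"
proof -
  have ci': "(I, J, restr (J - I) S) \<in> cell_index V"
    using image_cell_of_triple[OF V] tr by (force simp: cell_of_triple_def)
  have "cellY V F G T = cellSY V S I J \<longleftrightarrow> cellY V F G T = cellY V I J (restr (J - I) S)"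
    by (simp add: cellY_eq_cellSY[OF V tr])
  also have "\<dots> \<longleftrightarrow> (F, G, T) = (I, J, restr (J - I) S)"
    using inj_on_eq_iff[OF inj_on_cellY[OF V] ci ci'] by simp
  also have "\<dots> \<longleftrightarrow> (F, G) = (I, J) \<and> restr (G - F) S = restr (G - F) T"
    using restr_minor_covector[of T V F G] ci by (auto simp: cell_index_def minor_topes_def)
  finally show ?thesis .
qed

lemma bij_betw_quotient_kernel:
  assumes R: "R = {(x, y). x \<in> A \<and> y \<in> A \<and> f x = f y}"
  obtains \<Phi> where "bij_betw \<Phi> (A // R) (f ` A)" and "\<And>C x. C \<in> A // R \<Longrightarrow> x \<in> C \<Longrightarrow> \<Phi> C = f x"
proof -
  define \<Phi> where "\<Phi> C = f (SOME x. x \<in> C)" for C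
  have equiv_class: "R `` {a} = {x \<in> A. f x = f a}" if "a \<in> A" for a
    using that R by auto
  have \<Phi>_class: "\<Phi> C = f x" if "C \<in> A // R" "x \<in> C" for C x
  proof -
    obtain a where "a \<in> A" "C = R `` {a}" using \<open>C \<in> A // R\<close> by (auto simp: quotient_def)
    then show ?thesis using that(2) equiv_class someI[of "\<lambda>x. x \<in> C" x] by (auto simp: \<Phi>_def)
  qed
  have "bij_betw \<Phi> (A // R) (f ` A)"
  proof (rule bij_betw_imageI)
    show "inj_on \<Phi> (A // R)"
    proof (rule inj_onI)
      fix C D assume C: "C \<in> A // R" and D: "D \<in> A // R" and eq: "\<Phi> C = \<Phi> D"
      obtain a where a: "a \<in> A" "C = {x \<in> A. f x = f a}"
        using C equiv_class by (auto simp: quotient_def)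
      obtain b where b: "b \<in> A" "D = {x \<in> A. f x = f b}"
        using D equiv_class by (auto simp: quotient_def)
      have "\<Phi> C = f a" "\<Phi> D = f b" using \<Phi>_class C D a b by auto
      then show "C = D" using a b eq by simp
    qed
    have own_class: "a \<in> R `` {a}" "R `` {a} \<in> A // R" if "a \<in> A" for a
      using that R quotientI[OF that, of R] by auto
    show "\<Phi> ` (A // R) = f ` A"
    proof
      show "\<Phi> ` (A // R) \<subseteq> f ` A"
        using \<Phi>_class own_class by (auto simp: quotient_def)
      show "f ` A \<subseteq> \<Phi> ` (A // R)"
        using \<Phi>_class own_class by (metis image_eqI image_subsetI)
    qed
  qed
  then show thesis using \<Phi>_class that by blast
qed

theorem lemma5p4:
  fixes V :: "('e::finite \<Rightarrow> real) set"
  assumes "lin_subspace V"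
  shows "(\<exists>\<Phi>. bij_betw \<Phi> (triples V // sim V) (cell_index V) \<and>
            (\<forall>C\<in>triples V // sim V. \<forall>(I, J, S)\<in>C.
               (case \<Phi> C of (F, G, T) \<Rightarrow> cellY V F G T = cellSY V S I J)))
       \<and> (\<forall>(I, J, S)\<in>triples V. \<forall>(F, G, T)\<in>cell_index V.
            cellY V F G T = cellSY V S I J \<longleftrightarrow>
              (F, G) = (I, J) \<and> restr (G - F) S = restr (G - F) T)"
proof -
  obtain \<Phi> where bij: "bij_betw \<Phi> (triples V // sim V) (cell_of_triple ` triples V)"
    and \<Phi>: "\<And>C x. C \<in> triples V // sim V \<Longrightarrow> x \<in> C \<Longrightarrow> \<Phi> C = cell_of_triple x"
    using bij_betw_quotient_kernel[OF sim_eq_kernel_cell_of_triple] by blast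
  have "\<forall>C\<in>triples V // sim V. \<forall>(I, J, S)\<in>C.
      (case \<Phi> C of (F, G, T) \<Rightarrow> cellY V F G T = cellSY V S I J)"
  proof (intro ballI)
    fix C x assume C: "C \<in> triples V // sim V" and x: "x \<in> C"
    obtain I J S where x_eq: "x = (I, J, S)" by (rule prod_cases3)
    have "\<Phi> C = (I, J, restr (J - I) S)" using \<Phi>[OF C x] x_eq by (simp add: cell_of_triple_def)
    moreover have "(I, J, S) \<in> triples V" using C x x_eq by (auto simp: quotient_def sim_def)
    ultimately show "case x of (I, J, S) \<Rightarrow> (case \<Phi> C of (F, G, T) \<Rightarrow> cellY V F G T = cellSY V S I J)"
      using cellY_eq_cellSY[OF assms] x_eq by simp
  qed
  moreover have "bij_betw \<Phi> (triples V // sim V) (cell_index V)"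
    using bij image_cell_of_triple[OF assms] by simp
  moreover have "\<forall>(I, J, S)\<in>triples V. \<forall>(F, G, T)\<in>cell_index V.
      cellY V F G T = cellSY V S I J \<longleftrightarrow> (F, G) = (I, J) \<and> restr (G - F) S = restr (G - F) T"
    by (clarify, rule cellY_eq_cellSY_iff[OF assms])
  ultimately show ?thesis by blast
qed

end
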